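(* Let $G$ be a path or a cycle and let $I_s,I_t$ be independent sets of $G$. Then the minimum length of a reconfiguration sequence from $I_s$ to $I_t$ is exactly $\mathrm{cc}(I_s\triangle I_t)$.
   Context: All graphs are finite, simple and undirected. For $V'\subseteq V(G)$, $\mathrm{cc}(V')$ denotes the number of connected components of the induced subgraph $G[V']$. A reconfiguration sequence from $I_s$ to $I_t$ of length $\ell$ is a sequence $\langle I_s=I_0,\dots,I_\ell=I_t\rangle$ of independent sets of $G$ such that $G[I_{i-1}\triangle I_i]$ is connected for every $i\in\{1,\dots,\ell\}$. *)

theory Defs
  imports Main
begin

definition is_path_graph :: "'a set \<Rightarrow> 'a set set \<Rightarrow> bool" where
  "is_path_graph V E \<longleftrightarrow> (\<exists>vs. vs \<noteq> [] \<and> distinct vs \<and> V = set vs \<and>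
      E = {{vs ! i, vs ! Suc i} | i. Suc i < length vs})"

definition is_cycle_graph :: "'a set \<Rightarrow> 'a set set \<Rightarrow> bool" where
  "is_cycle_graph V E \<longleftrightarrow> (\<exists>vs. length vs \<ge> 3 \<and> distinct vs \<and> V = set vs \<and>
      E = {{vs ! i, vs ! ((Suc i) mod length vs)} | i. i < length vs})"

definition independent :: "'a set \<Rightarrow> 'a set set \<Rightarrow> 'a set \<Rightarrow> bool" where
  "independent V E I \<longleftrightarrow> I \<subseteq> V \<and> (\<forall>u\<in>I. \<forall>v\<in>I. {u, v} \<notin> E)"

definition adj_in :: "'a set set \<Rightarrow> 'a set \<Rightarrow> 'a \<Rightarrow> 'a \<Rightarrow> bool" where
  "adj_in E S u v \<longleftrightarrow> u \<in> S \<and> v \<in> S \<and> u \<noteq> v \<and> {u, v} \<in> E"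

definition induced_connected :: "'a set set \<Rightarrow> 'a set \<Rightarrow> bool" where
  "induced_connected E S \<longleftrightarrow> S \<noteq> {} \<and> (\<forall>u\<in>S. \<forall>v\<in>S. (adj_in E S)\<^sup>*\<^sup>* u v)"

definition cc :: "'a set set \<Rightarrow> 'a set \<Rightarrow> nat" where
  "cc E S = card {{u. (adj_in E S)\<^sup>*\<^sup>* v u} | v. v \<in> S}"

definition symdiff :: "'a set \<Rightarrow> 'a set \<Rightarrow> 'a set" where
  "symdiff A B = (A - B) \<union> (B - A)"

text \<open>Its length is l = length of the list minus 1.\<close>
definition reconf_seq :: "'a set \<Rightarrow> 'a set set \<Rightarrow> 'a set \<Rightarrow> 'a set \<Rightarrow> 'a set list \<Rightarrow> bool" where
  "reconf_seq V E Is It seq \<longleftrightarrow> seq \<noteq> [] \<and> hd seq = Is \<and> last seq = It \<and>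
     (\<forall>I\<in>set seq. independent V E I) \<and>
     (\<forall>i. Suc i < length seq \<longrightarrow> induced_connected E (symdiff (seq ! i) (seq ! Suc i)))"

end

(*
  Upper bound, valid in every finite graph: flip the connected components of the
  symmetric difference S of Is and It one at a time. A union U of components of G[S]
  is closed under adjacency in G[S], so no edge joins Is - U to U - Is and the flipped
  set stays independent; consecutive sets differ by a single (connected) component.

  Lower bound: read a vertex set X as a 0/1 word along the path, padded by an absent
  vertex at both ends, or around the cycle, and let b(X) count the switches between
  consecutive letters. Then b is subadditive under symmetric difference, a connected
  set is an interval or an arc and has b <= 2, and every component of X begins a run
  of ones, so 2 cc(X) <= b(X) unless X is the whole (connected) cycle. A sequence of
  length l writes the symmetric difference of Is and It as a symmetric difference of
  l connected sets, hence 2 cc <= b <= 2 l. Cutting a cycle open at a vertex outside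
  the set under consideration reduces the cycle estimates to the path estimates.
*)
theory Submission
  imports Defs
begin

section \<open>Connected components of induced subgraphs\<close>

definition component :: "'a set set \<Rightarrow> 'a set \<Rightarrow> 'a \<Rightarrow> 'a set" where
  "component E X v = {u. (adj_in E X)\<^sup>*\<^sup>* v u}"

lemma cc_eq_card_components: "cc E X = card (component E X ` X)"
  unfolding cc_def component_def by (simp add: Setcompr_eq_image)

lemma symp_adj_in: "symp (adj_in E X)"
  by (auto intro: sympI simp: adj_in_def insert_commute)

lemma adj_in_cong:
  assumes "\<And>u v. u \<in> X \<Longrightarrow> v \<in> X \<Longrightarrow> {u, v} \<in> E \<longleftrightarrow> {u, v} \<in> E'"
  shows "adj_in E X = adj_in E' X"
  using assms by (auto simp: adj_in_def fun_eq_iff)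

lemma cc_adj_in_cong: "adj_in E X = adj_in E' X \<Longrightarrow> cc E X = cc E' X"
  by (simp add: cc_def)

lemma induced_connected_adj_in_cong:
  "adj_in E X = adj_in E' X \<Longrightarrow> induced_connected E X \<longleftrightarrow> induced_connected E' X"
  by (simp add: induced_connected_def)

lemma rtranclp_closed:
  assumes "R\<^sup>*\<^sup>* a b" "a \<in> A" "\<And>x y. x \<in> A \<Longrightarrow> R x y \<Longrightarrow> y \<in> A"
  shows "b \<in> A"
  using assms(1,2) by induction (auto intro: assms(3))

lemma self_in_component: "v \<in> component E X v"
  by (simp add: component_def)

lemma component_closed: "u \<in> component E X v \<Longrightarrow> adj_in E X u w \<Longrightarrow> w \<in> component E X v"
  unfolding component_def by (auto intro: rtranclp.rtrancl_into_rtrancl)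

lemma component_subset: "v \<in> X \<Longrightarrow> component E X v \<subseteq> X"
  using rtranclp_closed[of "adj_in E X" v _ X] by (auto simp: component_def adj_in_def)

lemma component_eq:
  assumes "u \<in> component E X v"
  shows "component E X u = component E X v"
proof -
  have "(adj_in E X)\<^sup>*\<^sup>* v u" using assms by (simp add: component_def)
  then have "(adj_in E X)\<^sup>*\<^sup>* v = (adj_in E X)\<^sup>*\<^sup>* u"
    using equivp_rtranclp[OF symp_adj_in, of E X] unfolding equivp_def by blast
  then show ?thesis by (simp add: component_def)
qed

lemma components_disjoint:
  "component E X u \<noteq> component E X v \<Longrightarrow> component E X u \<inter> component E X v = {}"
  by (metis component_eq disjoint_iff)

lemma Union_components: "\<Union> (component E X ` X) = X"
  using component_subset self_in_component by fast

lemma Union_components_subset: "W \<subseteq> component E X ` X \<Longrightarrow> \<Union> W \<subseteq> X"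
  by (metis Union_components Union_mono)

lemma Union_components_closed:
  assumes "W \<subseteq> component E X ` X" "u \<in> \<Union> W" "adj_in E X u w"
  shows "w \<in> \<Union> W"
proof -
  obtain d where d: "d \<in> W" "u \<in> d" using assms(2) by blast
  then obtain v where "d = component E X v" using assms(1) by blast
  with d(2) have "w \<in> d" using component_closed[OF _ assms(3)] by simp
  with d(1) show ?thesis by blast
qed

lemma induced_connected_component:
  assumes "v \<in> X"
  shows "induced_connected E (component E X v)"
proof -
  let ?K = "component E X v"
  have restrict: "(adj_in E ?K)\<^sup>*\<^sup>* a b" if "(adj_in E X)\<^sup>*\<^sup>* a b" "a \<in> ?K" for a b
    using that
  proof induction
    case (step y z)
    then have "y \<in> ?K" "z \<in> ?K"
      using rtranclp_closed[OF step(1)] component_closed by fast+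
    with step show ?case by (auto simp: adj_in_def intro: rtranclp.rtrancl_into_rtrancl)
  qed simp
  have "(adj_in E X)\<^sup>*\<^sup>* a b" if "a \<in> ?K" "b \<in> ?K" for a b
    using that sympD[OF symp_rtranclp[OF symp_adj_in]] rtranclp_trans
    unfolding component_def by fast
  with restrict show ?thesis
    unfolding induced_connected_def using self_in_component by fast
qed

lemma cc_le_1_if_induced_connected:
  assumes "induced_connected E X"
  shows "cc E X \<le> 1"
proof -
  have "component E X v = X" if "v \<in> X" for v
    using that assms component_subset[OF that] by (auto simp: induced_connected_def component_def)
  then have "component E X ` X \<subseteq> {X}" by blast
  then show ?thesis
    unfolding cc_eq_card_components using card_mono[of "{X}"] by simp
qed

section \<open>Reconfiguration sequences\<close>

lemma reconf_seq_symdiff_subset: "reconf_seq V E Is It seq \<Longrightarrow> symdiff Is It \<subseteq> V"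
  unfolding reconf_seq_def independent_def symdiff_def
  by (metis Diff_subset Un_least hd_in_set last_in_set subset_trans)

lemma independent_symdiff_closed_subset:
  assumes Is: "independent V E Is" and It: "independent V E It"
    and U: "U \<subseteq> symdiff Is It"
    and closed: "\<And>u w. u \<in> U \<Longrightarrow> adj_in E (symdiff Is It) u w \<Longrightarrow> w \<in> U"
  shows "independent V E (symdiff Is U)"
proof -
  have no_cross_edge: "{x, y} \<notin> E" if x: "x \<in> Is - U" and y: "y \<in> U - Is" for x y
  proof
    assume xy: "{x, y} \<in> E"
    have "y \<in> It" using y U by (auto simp: symdiff_def)
    show False
    proof (cases "x \<in> It")
      case True
      with \<open>y \<in> It\<close> xy It show False by (auto simp: independent_def)
    next
      case False
      with x y U xy have "adj_in E (symdiff Is It) y x"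
        by (auto simp: adj_in_def symdiff_def insert_commute)
      with closed y x show False by blast
    qed
  qed
  have parts: "symdiff Is U = (Is - U) \<union> (U \<inter> It - Is)"
    using U by (auto simp: symdiff_def)
  have "{x, y} \<notin> E" if "x \<in> symdiff Is U" "y \<in> symdiff Is U" for x y
    using that parts no_cross_edge[of x y] no_cross_edge[of y x] Is It
    unfolding independent_def by (auto simp: insert_commute)
  moreover have "symdiff Is U \<subseteq> V"
    using parts Is It by (auto simp: independent_def)
  ultimately show ?thesis
    unfolding independent_def by blast
qed

lemma reconf_seq_singleton: "independent V E I \<Longrightarrow> reconf_seq V E I I [I]"
  by (simp add: reconf_seq_def)

lemma reconf_seq_snoc:
  assumes "reconf_seq V E A B seq" "independent V E C" "induced_connected E (symdiff B C)"
  shows "reconf_seq V E A C (seq @ [C])"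
proof -
  have "seq \<noteq> []" "seq ! (length seq - 1) = B" using assms(1)
    by (auto simp: reconf_seq_def last_conv_nth)
  then have "induced_connected E (symdiff ((seq @ [C]) ! i) ((seq @ [C]) ! Suc i))"
    if "Suc i = length seq" for i
    using that[symmetric] assms(3) by (auto simp: nth_append)
  with assms show ?thesis
    unfolding reconf_seq_def by (auto simp: nth_append less_Suc_eq)
qed

lemma reconf_seq_flipping_components:
  assumes Is: "independent V E Is" and It: "independent V E It"
    and "distinct cs" "set cs \<subseteq> component E (symdiff Is It) ` symdiff Is It"
  shows "\<exists>seq. reconf_seq V E Is (symdiff Is (\<Union> (set cs))) seq \<and> length seq = Suc (length cs)"
  using assms(3,4)
proof (induction cs rule: rev_induct)
  case Nil
  show ?case using reconf_seq_singleton[OF Is] by (auto simp: symdiff_def)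
next
  case (snoc c cs)
  let ?S = "symdiff Is It" and ?U = "\<Union> (set cs)" and ?U' = "\<Union> (set (cs @ [c]))"
  obtain seq where seq: "reconf_seq V E Is (symdiff Is ?U) seq" "length seq = Suc (length cs)"
    using snoc by auto
  have comps: "set (cs @ [c]) \<subseteq> component E ?S ` ?S" using snoc.prems(2) .
  obtain v where v: "v \<in> ?S" "c = component E ?S v" using comps by auto
  have "c \<inter> d = {}" if "d \<in> set cs" for d
  proof -
    have "d \<in> component E ?S ` ?S" using comps that by auto
    then obtain u where "d = component E ?S u" by blast
    moreover have "d \<noteq> c" using snoc.prems(1) that by auto
    ultimately show ?thesis using components_disjoint[of E ?S u v] v(2) by (simp add: Int_commute)
  qed
  then have "symdiff (symdiff Is ?U) (symdiff Is ?U') = c"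
    by (auto simp: symdiff_def)
  moreover have "induced_connected E c"
    using induced_connected_component v(1) unfolding v(2) .
  moreover have "independent V E (symdiff Is ?U')"
    using independent_symdiff_closed_subset[OF Is It] Union_components_subset[OF comps]
      Union_components_closed[OF comps] by blast
  ultimately have "reconf_seq V E Is (symdiff Is ?U') (seq @ [symdiff Is ?U'])"
    using reconf_seq_snoc[OF seq(1)] by simp
  with seq(2) show ?case by auto
qed

lemma reconf_seq_of_length_cc:
  assumes "finite V" "independent V E Is" "independent V E It"
  shows "\<exists>seq. reconf_seq V E Is It seq \<and> length seq - 1 = cc E (symdiff Is It)"
proof -
  let ?S = "symdiff Is It"
  have "?S \<subseteq> V" using assms(2,3) by (auto simp: independent_def symdiff_def)
  then have "finite (component E ?S ` ?S)" using assms(1) finite_subset by blast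
  then obtain cs where cs: "distinct cs" "set cs = component E ?S ` ?S"
    by (metis finite_distinct_list)
  have "\<Union> (set cs) = ?S" using cs(2) Union_components by metis
  then have "symdiff Is (\<Union> (set cs)) = It" by (auto simp: symdiff_def)
  moreover have "length cs = cc E ?S"
    using distinct_card[OF cs(1)] cs(2) by (simp add: cc_eq_card_components)
  ultimately show ?thesis
    using reconf_seq_flipping_components[OF assms(2,3) cs(1)] cs(2) by auto
qed

lemma reconf_seq_length_lower_bound:
  fixes b :: "'a set \<Rightarrow> nat"
  assumes rs: "reconf_seq V E Is It seq"
    and subadditive: "\<And>A B. b (symdiff A B) \<le> b A + b B" and "b {} = 0"
    and connected: "\<And>D. D \<subseteq> V \<Longrightarrow> induced_connected E D \<Longrightarrow> b D \<le> 2"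
  shows "b (symdiff Is It) \<le> 2 * (length seq - 1)"
proof -
  have "b (symdiff Is (seq ! j)) \<le> 2 * j" if "j < length seq" for j
    using that
  proof (induction j)
    case 0
    have "seq ! 0 = Is" using rs by (auto simp: reconf_seq_def hd_conv_nth)
    then show ?case using \<open>b {} = 0\<close> by (simp add: symdiff_def)
  next
    case (Suc j)
    let ?D = "symdiff (seq ! j) (seq ! Suc j)"
    have "seq ! j \<in> set seq" "seq ! Suc j \<in> set seq" using Suc.prems by simp_all
    then have "?D \<subseteq> V" using rs by (auto simp: reconf_seq_def independent_def symdiff_def)
    moreover have "induced_connected E ?D" using rs Suc.prems by (simp add: reconf_seq_def)
    ultimately have "b ?D \<le> 2" by (rule connected)
    moreover have "symdiff Is (seq ! Suc j) = symdiff (symdiff Is (seq ! j)) ?D"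
      by (auto simp: symdiff_def)
    ultimately show ?case using subadditive[of "symdiff Is (seq ! j)" ?D] Suc by simp
  qed
  moreover have "seq \<noteq> []" "seq ! (length seq - 1) = It"
    using rs by (auto simp: reconf_seq_def last_conv_nth)
  ultimately show ?thesis by (metis diff_less length_greater_0_conv zero_less_one)
qed

section \<open>Switches of boolean sequences\<close>

definition switches :: "(nat \<Rightarrow> bool) \<Rightarrow> nat \<Rightarrow> nat" where
  "switches f N = (\<Sum>i<N. of_bool (f i \<noteq> f (Suc i)))"

definition rises :: "(nat \<Rightarrow> bool) \<Rightarrow> nat \<Rightarrow> nat" where
  "rises f N = (\<Sum>i<N. of_bool (\<not> f i \<and> f (Suc i)))"

definition falls :: "(nat \<Rightarrow> bool) \<Rightarrow> nat \<Rightarrow> nat" where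
  "falls f N = (\<Sum>i<N. of_bool (f i \<and> \<not> f (Suc i)))"

lemma switches_cong: "(\<And>i. i \<le> N \<Longrightarrow> f i = g i) \<Longrightarrow> switches f N = switches g N"
  unfolding switches_def by (intro sum.cong) auto

lemma switches_eq_rises_plus_falls: "switches f N = rises f N + falls f N"
  unfolding switches_def rises_def falls_def sum.distrib[symmetric]
  by (intro sum.cong) auto

lemma rises_minus_falls: "int (rises f N) - int (falls f N) = of_bool (f N) - of_bool (f 0)"
proof -
  have "int (rises f N) - int (falls f N) = (\<Sum>i<N. of_bool (f (Suc i)) - of_bool (f i))"
    unfolding rises_def falls_def of_nat_sum sum_subtractf[symmetric] by (intro sum.cong) auto
  also have "\<dots> = of_bool (f N) - of_bool (f 0)"
    by (rule sum_lessThan_telescope)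
  finally show ?thesis .
qed

lemma switches_eq_twice_rises: "f N = f 0 \<Longrightarrow> switches f N = 2 * rises f N"
  using rises_minus_falls[of f N] switches_eq_rises_plus_falls[of f N] by simp

lemma switches_xor_le: "switches (\<lambda>i. f i \<noteq> g i) N \<le> switches f N + switches g N"
  unfolding switches_def sum.distrib[symmetric] by (intro sum_mono) auto

lemma switches_shift_periodic:
  assumes "\<And>i. f (i + n) = f i"
  shows "switches (\<lambda>i. f (i + q)) n = switches f n"
proof (induction q)
  case (Suc q)
  let ?g = "\<lambda>i. of_bool (f (i + q) \<noteq> f (Suc i + q)) :: nat"
  have "(\<Sum>i<n. ?g (Suc i)) + ?g 0 = (\<Sum>i<n. ?g i) + ?g n"
    using sum.lessThan_Suc_shift[of ?g n] sum.lessThan_Suc[of ?g n] by simp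
  moreover have "?g n = ?g 0"
    using assms[of q] assms[of "Suc q"] by (simp add: add.commute)
  ultimately show ?case
    using Suc by (simp add: switches_def)
qed simp

section \<open>Paths\<close>

definition path_edges :: "'a list \<Rightarrow> 'a set set" where
  "path_edges ws = {{ws ! i, ws ! Suc i} | i. Suc i < length ws}"

(* Position i of the word is ws ! (i - 1); positions 0 and length ws + 1 are padding. *)
definition padded_indicator :: "'a list \<Rightarrow> 'a set \<Rightarrow> nat \<Rightarrow> bool" where
  "padded_indicator ws X i \<longleftrightarrow> 0 < i \<and> i \<le> length ws \<and> ws ! (i - 1) \<in> X"

definition run_starts :: "'a list \<Rightarrow> 'a set \<Rightarrow> nat set" where
  "run_starts ws X = {p. p < length ws \<and> ws ! p \<in> X \<and> (p = 0 \<or> ws ! (p - 1) \<notin> X)}"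

lemma padded_indicator_symdiff:
  "padded_indicator ws (symdiff A B) i \<longleftrightarrow> padded_indicator ws A i \<noteq> padded_indicator ws B i"
  by (auto simp: padded_indicator_def symdiff_def)

lemma rises_padded_indicator:
  "rises (padded_indicator ws X) (Suc (length ws)) = card (run_starts ws X)"
proof -
  have "{..<Suc (length ws)} \<inter> {i. \<not> padded_indicator ws X i \<and> padded_indicator ws X (Suc i)}
      = run_starts ws X"
    by (auto simp: padded_indicator_def run_starts_def Suc_le_eq)
  then show ?thesis
    by (simp add: rises_def del: sum.lessThan_Suc)
qed

lemma switches_padded_indicator:
  "switches (padded_indicator ws X) (Suc (length ws)) = 2 * card (run_starts ws X)"
  using switches_eq_twice_rises[of "padded_indicator ws X"] rises_padded_indicator[of ws X]
  by (simp add: padded_indicator_def)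

lemma finite_run_starts: "finite (run_starts ws X)"
  unfolding run_starts_def by simp

lemma nth_in_prefix_iff:
  assumes "distinct ws" "i < length ws" "p \<le> length ws"
  shows "ws ! i \<in> (!) ws ` {..<p} \<longleftrightarrow> i < p"
  using assms nth_eq_iff_index_eq by fastforce

lemma path_edge_leaving_prefix:
  assumes "distinct ws" "p \<le> length ws" "{x, y} \<in> path_edges ws"
    and "x \<in> (!) ws ` {..<p}" "y \<notin> (!) ws ` {..<p}"
  shows "x = ws ! (p - 1)"
proof -
  obtain i where i: "Suc i < length ws" "{x, y} = {ws ! i, ws ! Suc i}"
    using assms(3) by (auto simp: path_edges_def)
  have prefix_iff: "ws ! j \<in> (!) ws ` {..<p} \<longleftrightarrow> j < p" if "j \<le> Suc i" for j
    using nth_in_prefix_iff[OF assms(1) _ assms(2)] that i(1) by simp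
  from i(2) consider "x = ws ! i" "y = ws ! Suc i" | "x = ws ! Suc i" "y = ws ! i"
    by (auto simp: doubleton_eq_iff)
  then show ?thesis
  proof cases
    case 1
    then have "i < p" "\<not> Suc i < p" using assms(4,5) prefix_iff by auto
    with 1 show ?thesis by (metis Suc_lessI diff_Suc_1)
  next
    case 2
    then have "Suc i < p" "\<not> i < p" using assms(4,5) prefix_iff by auto
    then show ?thesis by simp
  qed
qed

lemma component_eq_component_at_run_start:
  assumes "distinct ws" "X \<subseteq> set ws" "v \<in> X"
  obtains p where "p \<in> run_starts ws X" "component (path_edges ws) X v = component (path_edges ws) X (ws ! p)"
proof -
  let ?E = "path_edges ws" and ?K = "component (path_edges ws) X v"
  have KX: "?K \<subseteq> X" by (rule component_subset[OF assms(3)])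
  obtain i where "i < length ws" "ws ! i = v"
    using assms(2,3) by (meson in_set_conv_nth subsetD)
  then have "i \<in> {p. p < length ws \<and> ws ! p \<in> ?K}" using self_in_component by simp
  moreover define p where "p = Min {p. p < length ws \<and> ws ! p \<in> ?K}"
  ultimately have p: "p < length ws" "ws ! p \<in> ?K"
    and min: "\<And>q. q < length ws \<Longrightarrow> ws ! q \<in> ?K \<Longrightarrow> p \<le> q"
    using Min_in[of "{p. p < length ws \<and> ws ! p \<in> ?K}"] by auto
  have "ws ! (p - 1) \<notin> X" if "p \<noteq> 0"
  proof
    assume "ws ! (p - 1) \<in> X"
    moreover have "{ws ! (p - 1), ws ! Suc (p - 1)} \<in> ?E"
      using that p(1) unfolding path_edges_def by auto
    then have "{ws ! p, ws ! (p - 1)} \<in> ?E"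
      using that by (simp add: insert_commute)
    moreover have "ws ! p \<noteq> ws ! (p - 1)"
      using that p(1) assms(1) by (simp add: nth_eq_iff_index_eq)
    ultimately have "adj_in ?E X (ws ! p) (ws ! (p - 1))"
      using p(2) KX unfolding adj_in_def by auto
    then have "ws ! (p - 1) \<in> ?K" using component_closed p(2) by fast
    then have "p \<le> p - 1" using min p(1) by simp
    with that show False by simp
  qed
  then have "p \<in> run_starts ws X" using p KX unfolding run_starts_def by auto
  moreover have "?K = component ?E X (ws ! p)" using component_eq p(2) by metis
  ultimately show thesis by (rule that)
qed

lemma cc_path_le_card_run_starts:
  assumes "distinct ws" "X \<subseteq> set ws"
  shows "cc (path_edges ws) X \<le> card (run_starts ws X)"
proof -
  let ?C = "\<lambda>v. component (path_edges ws) X v"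
  have "?C v \<in> (\<lambda>p. ?C (ws ! p)) ` run_starts ws X" if v: "v \<in> X" for v
  proof -
    obtain p where "p \<in> run_starts ws X" "?C v = ?C (ws ! p)"
      using component_eq_component_at_run_start[OF assms v] .
    then show ?thesis by blast
  qed
  then have "?C ` X \<subseteq> (\<lambda>p. ?C (ws ! p)) ` run_starts ws X" by blast
  then have "cc (path_edges ws) X \<le> card ((\<lambda>p. ?C (ws ! p)) ` run_starts ws X)"
    unfolding cc_eq_card_components by (intro card_mono finite_imageI finite_run_starts)
  also have "\<dots> \<le> card (run_starts ws X)" by (rule card_image_le[OF finite_run_starts])
  finally show ?thesis .
qed

lemma card_run_starts_le_1:
  assumes "distinct ws" "induced_connected (path_edges ws) X"
  shows "card (run_starts ws X) \<le> 1"
proof -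
  have "\<not> p < q" if "p \<in> run_starts ws X" "q \<in> run_starts ws X" for p q
  proof
    assume "p < q"
    let ?A = "(!) ws ` {..<q}"
    have q: "q < length ws" "ws ! q \<in> X" "ws ! (q - 1) \<notin> X"
      using that \<open>p < q\<close> by (auto simp: run_starts_def)
    have "ws ! p \<in> X" using that by (simp add: run_starts_def)
    then have walk: "(adj_in (path_edges ws) X)\<^sup>*\<^sup>* (ws ! p) (ws ! q)"
      using assms(2) q(2) by (simp add: induced_connected_def)
    have "ws ! q \<in> ?A"
    proof (rule rtranclp_closed[OF walk])
      show "ws ! p \<in> ?A" using \<open>p < q\<close> by blast
      show "y \<in> ?A" if x: "x \<in> ?A" and xy: "adj_in (path_edges ws) X x y" for x y
      proof (rule ccontr)
        assume "y \<notin> ?A"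
        moreover have "{x, y} \<in> path_edges ws" using xy by (simp add: adj_in_def)
        ultimately have "x = ws ! (q - 1)"
          using path_edge_leaving_prefix[OF assms(1) less_imp_le[OF q(1)] _ x] by blast
        with xy q(3) show False by (simp add: adj_in_def)
      qed
    qed
    then show False using nth_in_prefix_iff[OF assms(1) q(1)] q(1) by simp
  qed
  then show ?thesis
    using card_le_Suc0_iff_eq[OF finite_run_starts] by (metis One_nat_def linorder_neqE_nat)
qed

lemma path_twice_cc_le_switches:
  "distinct ws \<Longrightarrow> X \<subseteq> set ws \<Longrightarrow>
    2 * cc (path_edges ws) X \<le> switches (padded_indicator ws X) (Suc (length ws))"
  using cc_path_le_card_run_starts by (simp add: switches_padded_indicator)

lemma path_switches_le_2_if_connected:
  "distinct ws \<Longrightarrow> induced_connected (path_edges ws) D \<Longrightarrow>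
    switches (padded_indicator ws D) (Suc (length ws)) \<le> 2"
  using card_run_starts_le_1 by (simp add: switches_padded_indicator)

lemma path_induced_connected:
  assumes "ws \<noteq> []" "distinct ws"
  shows "induced_connected (path_edges ws) (set ws)"
proof -
  let ?R = "adj_in (path_edges ws) (set ws)"
  have from_first: "?R\<^sup>*\<^sup>* (ws ! 0) (ws ! i)" if "i < length ws" for i
    using that
  proof (induction i)
    case (Suc i)
    have "ws ! i \<noteq> ws ! Suc i" using Suc.prems assms(2) by (simp add: nth_eq_iff_index_eq)
    with Suc.prems have "?R (ws ! i) (ws ! Suc i)"
      by (auto simp: adj_in_def path_edges_def)
    with Suc show ?case by (simp add: rtranclp.rtrancl_into_rtrancl)
  qed simp
  have "?R\<^sup>*\<^sup>* u v" if "u \<in> set ws" "v \<in> set ws" for u v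
    using that from_first sympD[OF symp_rtranclp[OF symp_adj_in]] rtranclp_trans
    by (metis in_set_conv_nth)
  with assms(1) show ?thesis by (simp add: induced_connected_def)
qed

lemma path_reconf_lower_bound:
  assumes "distinct ws" and rs: "reconf_seq (set ws) (path_edges ws) Is It seq"
  shows "cc (path_edges ws) (symdiff Is It) \<le> length seq - 1"
proof -
  let ?b = "\<lambda>X. switches (padded_indicator ws X) (Suc (length ws))"
  have "?b (symdiff Is It) \<le> 2 * (length seq - 1)"
  proof (rule reconf_seq_length_lower_bound[OF rs])
    show "?b (symdiff A B) \<le> ?b A + ?b B" for A B
      unfolding padded_indicator_symdiff by (rule switches_xor_le)
    show "?b {} = 0" by (simp add: switches_def padded_indicator_def)
    show "?b D \<le> 2" if "induced_connected (path_edges ws) D" for D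
      using path_switches_le_2_if_connected[OF assms(1) that] .
  qed
  with path_twice_cc_le_switches[OF assms(1) reconf_seq_symdiff_subset[OF rs]] show ?thesis
    by linarith
qed

section \<open>Cycles\<close>

definition cycle_edges :: "'a list \<Rightarrow> 'a set set" where
  "cycle_edges vs = {{vs ! i, vs ! (Suc i mod length vs)} | i. i < length vs}"

definition cyclic_indicator :: "'a list \<Rightarrow> 'a set \<Rightarrow> nat \<Rightarrow> bool" where
  "cyclic_indicator vs X i \<longleftrightarrow> vs ! (i mod length vs) \<in> X"

lemma cyclic_indicator_symdiff:
  "cyclic_indicator vs (symdiff A B) i \<longleftrightarrow> cyclic_indicator vs A i \<noteq> cyclic_indicator vs B i"
  by (auto simp: cyclic_indicator_def symdiff_def)

lemma cycle_edges_eq_image: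
  "cycle_edges vs = (\<lambda>j. {vs ! j, vs ! (Suc j mod length vs)}) ` {..<length vs}"
  by (auto simp: cycle_edges_def)

lemma cycle_edges_rotate1: "cycle_edges (rotate1 vs) = cycle_edges vs"
proof (cases "vs = []")
  case False
  let ?n = "length vs" and ?g = "\<lambda>j. {vs ! j, vs ! (Suc j mod length vs)}"
  have "rotate1 vs ! i = vs ! (Suc i mod ?n)" "rotate1 vs ! (Suc i mod ?n) = vs ! (Suc (Suc i mod ?n) mod ?n)"
    if "i < ?n" for i
    using that False by (simp_all add: nth_rotate1)
  then have edges: "cycle_edges (rotate1 vs) = ?g ` (\<lambda>i. Suc i mod ?n) ` {..<?n}"
    unfolding cycle_edges_eq_image[of "rotate1 vs"] image_image by (intro image_cong) simp_all
  have "j \<in> (\<lambda>i. Suc i mod ?n) ` {..<?n}" if "j < ?n" for j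
  proof (cases j)
    case 0
    with False show ?thesis by (intro image_eqI[of _ _ "?n - 1"]) auto
  next
    case (Suc i)
    with that show ?thesis by (intro image_eqI[of _ _ i]) auto
  qed
  then have "(\<lambda>i. Suc i mod ?n) ` {..<?n} = {..<?n}"
    using False by auto
  then show ?thesis unfolding edges by (simp only: cycle_edges_eq_image[of vs])
qed simp

lemma cycle_edges_rotate: "cycle_edges (rotate q vs) = cycle_edges vs"
  by (induction q) (simp_all add: cycle_edges_rotate1)

lemma switches_cyclic_indicator_rotate:
  "switches (cyclic_indicator (rotate q vs) X) (length vs) = switches (cyclic_indicator vs X) (length vs)"
proof (cases "vs = []")
  case False
  have "cyclic_indicator (rotate q vs) X = (\<lambda>i. cyclic_indicator vs X (i + q))"
    using False by (simp add: fun_eq_iff cyclic_indicator_def nth_rotate mod_add_right_eq add.commute)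
  moreover have "\<And>i. cyclic_indicator vs X (i + length vs) = cyclic_indicator vs X i"
    by (simp add: cyclic_indicator_def)
  ultimately show ?thesis
    using switches_shift_periodic by metis
qed simp

lemma cycle_edges_Cons_restrict:
  assumes "distinct (x # xs)" "u \<in> set xs" "v \<in> set xs"
  shows "{u, v} \<in> cycle_edges (x # xs) \<longleftrightarrow> {u, v} \<in> path_edges xs"
proof
  let ?n = "Suc (length xs)"
  assume "{u, v} \<in> cycle_edges (x # xs)"
  then obtain i where i: "i < ?n" "{u, v} = {(x # xs) ! i, (x # xs) ! (Suc i mod ?n)}"
    by (auto simp: cycle_edges_def)
  have x: "x \<notin> {u, v}" using assms by auto
  then obtain j where j: "i = Suc j" using i(2) by (cases i) auto
  have "Suc i \<noteq> ?n" using x i(2) by (metis insert_iff mod_self nth_Cons_0)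
  then have "Suc j < length xs" "{u, v} = {xs ! j, xs ! Suc j}" using i j by auto
  then show "{u, v} \<in> path_edges xs" by (auto simp: path_edges_def)
next
  assume "{u, v} \<in> path_edges xs"
  then obtain j where "Suc j < length xs" "{u, v} = {xs ! j, xs ! Suc j}"
    by (auto simp: path_edges_def)
  then show "{u, v} \<in> cycle_edges (x # xs)"
    unfolding cycle_edges_def by (intro CollectI exI[of _ "Suc j"]) simp
qed

lemma cyclic_indicator_Cons:
  assumes "x \<notin> X" "i \<le> Suc (length xs)"
  shows "cyclic_indicator (x # xs) X i = padded_indicator xs X i"
proof (cases "i = Suc (length xs)")
  case False
  with assms(2) have "i mod Suc (length xs) = i" by simp
  then show ?thesis using assms False
    by (cases i) (simp_all add: cyclic_indicator_def padded_indicator_def)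
qed (use assms in \<open>simp add: cyclic_indicator_def padded_indicator_def\<close>)

lemma cycle_cut_open:
  assumes "distinct vs" "x \<in> set vs" "x \<notin> X" "X \<subseteq> set vs"
  obtains xs where "distinct xs" "X \<subseteq> set xs"
    "adj_in (cycle_edges vs) X = adj_in (path_edges xs) X"
    "switches (cyclic_indicator vs X) (length vs) = switches (padded_indicator xs X) (Suc (length xs))"
proof -
  obtain q where q: "q < length vs" "vs ! q = x" using assms(2) by (meson in_set_conv_nth)
  define xs where "xs = tl (rotate q vs)"
  have "vs \<noteq> []" using q(1) by auto
  then have "rotate q vs \<noteq> []" "hd (rotate q vs) = x"
    using q by (simp_all add: hd_rotate_conv_nth)
  then have rot: "rotate q vs = x # xs" unfolding xs_def by (metis list.collapse)
  have dist: "distinct (x # xs)" using assms(1) rot by (metis distinct_rotate)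
  have "set (x # xs) = set vs" using rot by (metis set_rotate)
  then have Xxs: "X \<subseteq> set xs" using assms(3,4) by auto
  have "adj_in (cycle_edges vs) X = adj_in (cycle_edges (x # xs)) X"
    using cycle_edges_rotate[of q vs] rot by simp
  also have "\<dots> = adj_in (path_edges xs) X"
    using cycle_edges_Cons_restrict[OF dist] Xxs by (intro adj_in_cong) blast
  finally have adj: "adj_in (cycle_edges vs) X = adj_in (path_edges xs) X" .
  have "length vs = Suc (length xs)" using rot by (metis length_Cons length_rotate)
  then have "switches (cyclic_indicator vs X) (length vs)
      = switches (cyclic_indicator (x # xs) X) (Suc (length xs))"
    using switches_cyclic_indicator_rotate[of q vs X] rot by simp
  also have "\<dots> = switches (padded_indicator xs X) (Suc (length xs))"
    using cyclic_indicator_Cons[OF assms(3)] by (intro switches_cong) simp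
  finally show thesis
    using that[OF _ Xxs adj] dist by simp
qed

lemma cycle_switches_le_2_if_connected:
  assumes "distinct vs" "D \<subseteq> set vs" "induced_connected (cycle_edges vs) D"
  shows "switches (cyclic_indicator vs D) (length vs) \<le> 2"
proof (cases "D = set vs")
  case True
  with assms(3) have "vs \<noteq> []" by (auto simp: induced_connected_def)
  then have "cyclic_indicator vs D i" for i
    using True by (simp add: cyclic_indicator_def)
  then show ?thesis by (simp add: switches_def)
next
  case False
  then obtain x where "x \<in> set vs" "x \<notin> D" using assms(2) by blast
  from cycle_cut_open[OF assms(1) this assms(2)] obtain xs where "distinct xs"
    "adj_in (cycle_edges vs) D = adj_in (path_edges xs) D"
    "switches (cyclic_indicator vs D) (length vs) = switches (padded_indicator xs D) (Suc (length xs))" .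
  with assms(3) show ?thesis
    using path_switches_le_2_if_connected induced_connected_adj_in_cong by metis
qed

lemma cycle_twice_cc_le_switches:
  assumes "distinct vs" "X \<subseteq> set vs" "X \<noteq> set vs"
  shows "2 * cc (cycle_edges vs) X \<le> switches (cyclic_indicator vs X) (length vs)"
proof -
  obtain x where "x \<in> set vs" "x \<notin> X" using assms(2,3) by blast
  from cycle_cut_open[OF assms(1) this assms(2)] obtain xs where "distinct xs" "X \<subseteq> set xs"
    "adj_in (cycle_edges vs) X = adj_in (path_edges xs) X"
    "switches (cyclic_indicator vs X) (length vs) = switches (padded_indicator xs X) (Suc (length xs))" .
  then show ?thesis
    using path_twice_cc_le_switches cc_adj_in_cong by metis
qed

lemma path_edges_subset_cycle_edges: "path_edges vs \<subseteq> cycle_edges vs"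
  unfolding path_edges_def cycle_edges_def by force

lemma cycle_induced_connected:
  assumes "vs \<noteq> []" "distinct vs"
  shows "induced_connected (cycle_edges vs) (set vs)"
proof -
  have "adj_in (path_edges vs) (set vs) \<le> adj_in (cycle_edges vs) (set vs)"
    using path_edges_subset_cycle_edges[of vs] by (auto simp: adj_in_def)
  then show ?thesis
    using path_induced_connected[OF assms] rtranclp_mono
    unfolding induced_connected_def by (metis predicate2D)
qed

lemma cycle_reconf_lower_bound:
  assumes "distinct vs" and rs: "reconf_seq (set vs) (cycle_edges vs) Is It seq"
  shows "cc (cycle_edges vs) (symdiff Is It) \<le> length seq - 1"
proof (cases "symdiff Is It = set vs")
  case True
  \<comment> \<open>the whole cycle has no switches, so its connectivity is used instead\<close>
  show ?thesis
  proof (cases "vs = []")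
    case True
    with \<open>symdiff Is It = set vs\<close> show ?thesis by (simp add: cc_def)
  next
    case False
    have "length seq \<noteq> 0" using rs by (simp add: reconf_seq_def)
    moreover have "length seq \<noteq> 1"
    proof
      assume "length seq = 1"
      then have "Is = It" using rs by (auto simp: reconf_seq_def hd_conv_nth last_conv_nth)
      with \<open>symdiff Is It = set vs\<close> False show False by (simp add: symdiff_def)
    qed
    moreover have "cc (cycle_edges vs) (symdiff Is It) \<le> 1"
      using cc_le_1_if_induced_connected cycle_induced_connected[OF False assms(1)] True by simp
    ultimately show ?thesis by linarith
  qed
next
  case False
  let ?b = "\<lambda>X. switches (cyclic_indicator vs X) (length vs)"
  have "?b (symdiff Is It) \<le> 2 * (length seq - 1)"
  proof (rule reconf_seq_length_lower_bound[OF rs])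
    show "?b (symdiff A B) \<le> ?b A + ?b B" for A B
      unfolding cyclic_indicator_symdiff by (rule switches_xor_le)
    show "?b {} = 0" by (simp add: switches_def cyclic_indicator_def)
    show "?b D \<le> 2" if "D \<subseteq> set vs" "induced_connected (cycle_edges vs) D" for D
      using cycle_switches_le_2_if_connected[OF assms(1) that] .
  qed
  with cycle_twice_cc_le_switches[OF assms(1) reconf_seq_symdiff_subset[OF rs] False] show ?thesis
    by linarith
qed

theorem theorem29:
  fixes V :: "'a set" and E :: "'a set set" and Is It :: "'a set"
  assumes "is_path_graph V E \<or> is_cycle_graph V E"
    and "independent V E Is" and "independent V E It"
  shows "(\<exists>seq. reconf_seq V E Is It seq \<and> length seq - 1 = cc E (symdiff Is It)) \<and>
         (\<forall>seq. reconf_seq V E Is It seq \<longrightarrow> cc E (symdiff Is It) \<le> length seq - 1)"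
proof
  obtain vs where "V = set vs"
    using assms(1) unfolding is_path_graph_def is_cycle_graph_def by blast
  then show "\<exists>seq. reconf_seq V E Is It seq \<and> length seq - 1 = cc E (symdiff Is It)"
    using reconf_seq_of_length_cc[OF _ assms(2,3)] by blast
  show "\<forall>seq. reconf_seq V E Is It seq \<longrightarrow> cc E (symdiff Is It) \<le> length seq - 1"
    using assms(1)
  proof
    assume "is_path_graph V E"
    then obtain ws where "distinct ws" "V = set ws" "E = path_edges ws"
      unfolding is_path_graph_def path_edges_def by blast
    then show ?thesis using path_reconf_lower_bound by blast
  next
    assume "is_cycle_graph V E"
    then obtain vs where "distinct vs" "V = set vs" "E = cycle_edges vs"
      unfolding is_cycle_graph_def cycle_edges_def by blast
    then show ?thesis using cycle_reconf_lower_bound by blast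
  qed
qed

end
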